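(* Consider the Beverton–Holt equation $u(t+1)=\dfrac{\mu K(t)u(t)}{K(t)+(\mu-1)u(t)}$, $t\in\mathbb Z_+$, where $\mu>1$, $\tau\in\mathbb N$, and $K:\mathbb Z_+\to\mathbb R$ is asymptotically $\tau$-periodic with $\alpha\le K(t)\le\beta$ for all $t$, for some constants $0<\alpha\le\beta$. Then for every initial value $u\ge0$ the solution $\varphi(t,u,K)$ with $\varphi(0,u,K)=u$ is asymptotically $\tau$-periodic.
   Context: A sequence $K$ is asymptotically $\tau$-periodic if $K=P+R$ with $P(t+\tau)=P(t)$ for all $t\in\mathbb Z_+$ and $R(t)\to0$ as $t\to\infty$. A solution is asymptotically $\tau$-periodic if it differs from a $\tau$-periodic sequence by a sequence tending to $0$. *)

theory Defs
  imports Complex_Main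
begin

definition periodic_seq :: "nat \<Rightarrow> (nat \<Rightarrow> real) \<Rightarrow> bool" where
  "periodic_seq tau P \<longleftrightarrow> (\<forall>t. P (t + tau) = P t)"

definition asymp_periodic :: "nat \<Rightarrow> (nat \<Rightarrow> real) \<Rightarrow> bool" where
  "asymp_periodic tau K \<longleftrightarrow>
     (\<exists>P R. periodic_seq tau P \<and> (\<forall>t. K t = P t + R t) \<and> R \<longlonglongrightarrow> 0)"

primrec bh_sol :: "real \<Rightarrow> (nat \<Rightarrow> real) \<Rightarrow> real \<Rightarrow> nat \<Rightarrow> real" where
  "bh_sol mu K u 0 = u"
| "bh_sol mu K u (Suc t) =
     mu * K t * bh_sol mu K u t / (K t + (mu - 1) * bh_sol mu K u t)"

end

theory Submission
  imports Defs
begin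

text \<open>The substitution x = 1/u turns the Beverton--Holt equation into the affine recurrence
  x(t+1) = x(t)/\<mu> + (\<mu>-1)/(\<mu> K(t)). Replacing K by its periodic part P gives an affine
  recurrence with periodic input, which has a periodic solution y (the fixed point of the
  period map, a contraction). Since 1/K - 1/P \<rightarrow> 0 and the recurrence contracts with factor
  1/\<mu>, x - y \<rightarrow> 0; as x and y are bounded away from 0, the solution 1/x differs from the
  periodic sequence 1/y by a null sequence.\<close>

primrec affine_iter :: "real \<Rightarrow> (nat \<Rightarrow> real) \<Rightarrow> real \<Rightarrow> nat \<Rightarrow> real" where
  "affine_iter a f y0 0 = y0"
| "affine_iter a f y0 (Suc t) = a * affine_iter a f y0 t + f t"

lemma affine_iter_eq: "affine_iter a f y0 n = a ^ n * y0 + affine_iter a f 0 n"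
  by (induction n) (simp_all add: algebra_simps)

lemma affine_iter_nonneg:
  assumes "0 \<le> a" "\<And>t. 0 \<le> f t" "0 \<le> y0"
  shows "0 \<le> affine_iter a f y0 n"
  using assms by (induction n) simp_all

lemma affine_iter_Suc_ge:
  assumes "0 \<le> a" "\<And>t. 0 \<le> f t" "0 \<le> y0"
  shows "f t \<le> affine_iter a f y0 (Suc t)"
  using affine_iter_nonneg[of a f y0 t, OF assms] assms(1) by simp

lemma affine_iter_ge_min:
  assumes "0 \<le> a" "\<And>t. 0 \<le> f t" "0 \<le> y0" "\<And>t. m \<le> f t"
  shows "min y0 m \<le> affine_iter a f y0 t"
proof (cases t)
  case (Suc s)
  then show ?thesis using affine_iter_Suc_ge[of a f y0 s, OF assms(1-3)] assms(4)[of s] by simp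
qed simp

lemma periodic_affine_iter_ge:
  assumes "periodic_seq tau (affine_iter a f y0)" "0 < tau"
    and "0 \<le> a" "\<And>t. 0 \<le> f t" "0 \<le> y0" "\<And>t. m \<le> f t"
  shows "m \<le> affine_iter a f y0 t"
proof -
  obtain s where s: "t + tau = Suc s" using \<open>0 < tau\<close> by (cases "t + tau") auto
  have "affine_iter a f y0 t = affine_iter a f y0 (Suc s)"
    using assms(1) s unfolding periodic_seq_def by metis
  then show ?thesis using affine_iter_Suc_ge[of a f y0 s, OF assms(3-5)] assms(6)[of s] by simp
qed

lemma affine_iter_periodic:
  assumes "periodic_seq tau f" "affine_iter a f y0 tau = y0"
  shows "periodic_seq tau (affine_iter a f y0)"
proof -
  have "affine_iter a f y0 (t + tau) = affine_iter a f y0 t" for t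
    using assms by (induction t) (simp_all add: periodic_seq_def)
  then show ?thesis by (simp add: periodic_seq_def)
qed

lemma affine_iter_periodic_exists:
  assumes "0 \<le> a" "a < 1" "0 < tau" "periodic_seq tau f" "\<And>t. 0 \<le> f t"
  obtains y0 where "0 \<le> y0" "periodic_seq tau (affine_iter a f y0)"
proof
  define L where "L = affine_iter a f 0 tau"
  have apow: "a ^ tau < 1" using assms(1-3) by (simp add: power_less_one_iff)
  have "0 \<le> L" unfolding L_def using assms by (intro affine_iter_nonneg) auto
  then show "0 \<le> L / (1 - a ^ tau)" using apow by simp
  \<comment> \<open>by affine_iter_eq the period map is y0 \<mapsto> a ^ tau * y0 + L; take its fixed point\<close>
  have "affine_iter a f (L / (1 - a ^ tau)) tau = L / (1 - a ^ tau)"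
    using affine_iter_eq[of a f _ tau] apow by (simp add: L_def[symmetric] field_simps)
  then show "periodic_seq tau (affine_iter a f (L / (1 - a ^ tau)))"
    using affine_iter_periodic[OF assms(4)] by blast
qed

lemma contracting_seq_tendsto_zero:
  fixes e g :: "nat \<Rightarrow> real"
  assumes a: "0 \<le> a" "a < 1" and rec: "\<And>t. \<bar>e (Suc t)\<bar> \<le> a * \<bar>e t\<bar> + \<bar>g t\<bar>"
    and g: "g \<longlonglongrightarrow> 0"
  shows "e \<longlonglongrightarrow> 0"
proof (rule LIMSEQ_I)
  fix r :: real assume r: "0 < r"
  define d where "d = r * (1 - a) / 2"
  have d: "d > 0" using r a by (simp add: d_def)
  from LIMSEQ_D[OF g d] obtain N where N: "\<And>n. n \<ge> N \<Longrightarrow> \<bar>g n\<bar> < d" by auto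
  have bound: "\<bar>e (N + k)\<bar> \<le> a ^ k * \<bar>e N\<bar> + d / (1 - a)" for k
  proof (induction k)
    case 0
    then show ?case using d a by simp
  next
    case (Suc k)
    have "\<bar>e (N + Suc k)\<bar> \<le> a * \<bar>e (N + k)\<bar> + \<bar>g (N + k)\<bar>" using rec[of "N + k"] by simp
    also have "\<dots> \<le> a * (a ^ k * \<bar>e N\<bar> + d / (1 - a)) + d"
      using Suc.IH a N[of "N + k"] by (intro add_mono mult_left_mono) auto
    also have "\<dots> = a ^ Suc k * \<bar>e N\<bar> + d / (1 - a)"
      using a by (simp add: field_simps)
    finally show ?case .
  qed
  have "(\<lambda>k. a ^ k * \<bar>e N\<bar>) \<longlonglongrightarrow> 0"
    using a by (intro tendsto_mult_left_zero LIMSEQ_power_zero) simp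
  from LIMSEQ_D[OF this, of "r / 2"] r
  obtain M where M: "\<And>k. k \<ge> M \<Longrightarrow> \<bar>a ^ k * \<bar>e N\<bar>\<bar> < r / 2" by auto
  have half: "d / (1 - a) = r / 2" using a by (simp add: d_def field_simps)
  have "\<bar>e n\<bar> < r" if "n \<ge> N + M" for n
  proof -
    have "n = N + (n - N)" "M \<le> n - N" using that by auto
    then show ?thesis using bound[of "n - N"] M[of "n - N"] half by simp
  qed
  then show "\<exists>no. \<forall>n\<ge>no. norm (e n - 0) < r" by auto
qed

lemma affine_iter_diff_tendsto_zero:
  assumes "\<bar>a\<bar> < 1" "(\<lambda>t. f t - g t) \<longlonglongrightarrow> 0"
  shows "(\<lambda>t. affine_iter a f x0 t - affine_iter a g y0 t) \<longlonglongrightarrow> 0"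
proof (rule contracting_seq_tendsto_zero[of "\<bar>a\<bar>" _ "\<lambda>t. f t - g t"])
  fix t
  have "affine_iter a f x0 (Suc t) - affine_iter a g y0 (Suc t)
      = a * (affine_iter a f x0 t - affine_iter a g y0 t) + (f t - g t)"
    by (simp add: algebra_simps)
  then show "\<bar>affine_iter a f x0 (Suc t) - affine_iter a g y0 (Suc t)\<bar>
      \<le> \<bar>a\<bar> * \<bar>affine_iter a f x0 t - affine_iter a g y0 t\<bar> + \<bar>f t - g t\<bar>"
    by (metis abs_mult abs_triangle_ineq)
qed (use assms in auto)

lemma inverse_diff_tendsto_zero:
  fixes f g :: "nat \<Rightarrow> real"
  assumes "(\<lambda>t. f t - g t) \<longlonglongrightarrow> 0" "0 < m" "\<And>t. m \<le> f t" "\<And>t. m \<le> g t"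
  shows "(\<lambda>t. 1 / f t - 1 / g t) \<longlonglongrightarrow> 0"
proof (rule tendsto_0_le[OF assms(1), where K = "1 / m\<^sup>2"])
  show "\<forall>\<^sub>F t in sequentially. norm (1 / f t - 1 / g t) \<le> norm (f t - g t) * (1 / m\<^sup>2)"
  proof (intro always_eventually allI)
    fix t
    have fg: "0 < f t" "0 < g t" using assms(3,4)[of t] assms(2) by auto
    then have "norm (1 / f t - 1 / g t) = \<bar>f t - g t\<bar> / (f t * g t)"
      by (simp add: field_simps abs_minus_commute)
    also have "\<dots> \<le> \<bar>f t - g t\<bar> / (m * m)"
      using assms(3,4)[of t] assms(2) by (intro divide_left_mono mult_mono) auto
    finally show "norm (1 / f t - 1 / g t) \<le> norm (f t - g t) * (1 / m\<^sup>2)"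
      by (simp add: power2_eq_square)
  qed
qed

lemma periodic_seq_add_mult:
  assumes "periodic_seq tau P"
  shows "P (t + n * tau) = P t"
proof (induction n)
  case (Suc n)
  have "P (t + Suc n * tau) = P ((t + n * tau) + tau)" by (simp add: algebra_simps)
  then show ?case using assms Suc unfolding periodic_seq_def by simp
qed simp

lemma periodic_part_mem_closed:
  assumes "periodic_seq tau P" "0 < tau" "R \<longlonglongrightarrow> 0" "\<And>t. K t = P t + R t"
    and "closed S" "\<And>t. K t \<in> S"
  shows "P t \<in> S"
proof -
  have "strict_mono (\<lambda>n. t + n * tau)" using \<open>0 < tau\<close> by (auto simp: strict_mono_def)
  then have "(\<lambda>n. R (t + n * tau)) \<longlonglongrightarrow> 0"
    using LIMSEQ_subseq_LIMSEQ[OF \<open>R \<longlonglongrightarrow> 0\<close>] by (simp add: comp_def)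
  then have "(\<lambda>n. P t + R (t + n * tau)) \<longlonglongrightarrow> P t + 0"
    by (intro tendsto_add tendsto_const)
  moreover have "K (t + n * tau) = P t + R (t + n * tau)" for n
    using assms(4) periodic_seq_add_mult[OF assms(1)] by simp
  ultimately have lim: "(\<lambda>n. K (t + n * tau)) \<longlonglongrightarrow> P t" by simp
  show ?thesis by (rule closed_sequentially[OF \<open>closed S\<close> _ lim]) (use assms(6) in simp)
qed

lemma bh_sol_pos:
  assumes "1 < mu" "\<And>t. 0 < K t" "0 < u"
  shows "0 < bh_sol mu K u t"
proof (induction t)
  case (Suc t)
  then show ?case using assms(1) assms(2)[of t] by (simp add: add_pos_nonneg)
qed (use assms in simp)

lemma bh_sol_eq_inverse_affine_iter:
  assumes "1 < mu" "\<And>t. 0 < K t" "0 < u"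
  shows "bh_sol mu K u t = 1 / affine_iter (1 / mu) (\<lambda>t. (mu - 1) / (mu * K t)) (1 / u) t"
proof -
  have "1 / bh_sol mu K u t = affine_iter (1 / mu) (\<lambda>t. (mu - 1) / (mu * K t)) (1 / u) t"
  proof (induction t)
    case (Suc t)
    have "0 < bh_sol mu K u t" "0 < K t + (mu - 1) * bh_sol mu K u t"
      using bh_sol_pos[of mu K u t, OF assms] assms(1) assms(2)[of t] by (auto simp: add_pos_nonneg)
    then show ?case using Suc assms(1) assms(2)[of t] by (simp add: field_simps)
  qed simp
  then show ?thesis by (metis inverse_eq_divide inverse_inverse_eq)
qed

lemma bh_sol_asymp_periodic_pos:
  assumes mu: "1 < mu" and tau: "0 < tau" and per: "periodic_seq tau P"
    and R: "R \<longlonglongrightarrow> 0" and KPR: "\<And>t. K t = P t + R t"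
    and alpha: "0 < alpha" and K: "\<And>t. K t \<in> {alpha..beta}" and u: "0 < u"
  shows "asymp_periodic tau (bh_sol mu K u)"
proof -
  have P: "P t \<in> {alpha..beta}" for t
    using per tau R KPR closed_atLeastAtMost K by (rule periodic_part_mem_closed)
  define f where "f Q = (\<lambda>t. (mu - 1) / (mu * Q t))" for Q :: "nat \<Rightarrow> real"
  have f_ge: "(mu - 1) / (mu * beta) \<le> f Q t" if "Q t \<in> {alpha..beta}" for Q t
    using that mu alpha by (auto simp: f_def intro!: divide_left_mono mult_mono)
  have f_nonneg: "0 \<le> f Q t" if "\<And>t. Q t \<in> {alpha..beta}" for Q t
    using that[of t] mu alpha by (simp add: f_def)
  have "periodic_seq tau (f P)" using per by (simp add: periodic_seq_def f_def)
  then obtain y0 where y0: "0 \<le> y0" and yper: "periodic_seq tau (affine_iter (1 / mu) (f P) y0)"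
    using affine_iter_periodic_exists[of "1 / mu" tau "f P"] mu tau f_nonneg[OF P] by auto
  define x where "x = affine_iter (1 / mu) (f K) (1 / u)"
  define y where "y = affine_iter (1 / mu) (f P) y0"
  define m where "m = min (1 / u) ((mu - 1) / (mu * beta))"
  have "0 < m" using mu u alpha K[of 0] by (simp add: m_def)
  have x_ge: "m \<le> x t" for t unfolding x_def m_def
    using mu u f_nonneg[OF K] f_ge[OF K] by (intro affine_iter_ge_min) auto
  have y_ge: "m \<le> y t" for t unfolding y_def
    using periodic_affine_iter_ge[OF yper tau, of "(mu - 1) / (mu * beta)"]
      mu y0 f_nonneg[OF P] f_ge[OF P]
    by (simp add: m_def min.coboundedI2)
  have "(\<lambda>t. 1 / K t - 1 / P t) \<longlonglongrightarrow> 0"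
    using alpha K P R KPR by (intro inverse_diff_tendsto_zero[where m = alpha]) auto
  then have "(\<lambda>t. (mu - 1) / mu * (1 / K t - 1 / P t)) \<longlonglongrightarrow> 0"
    by (rule tendsto_mult_right_zero)
  then have "(\<lambda>t. f K t - f P t) \<longlonglongrightarrow> 0"
    by (simp add: f_def right_diff_distrib)
  then have "(\<lambda>t. x t - y t) \<longlonglongrightarrow> 0"
    unfolding x_def y_def using mu by (intro affine_iter_diff_tendsto_zero) auto
  then have "(\<lambda>t. 1 / x t - 1 / y t) \<longlonglongrightarrow> 0"
    using \<open>0 < m\<close> x_ge y_ge by (rule inverse_diff_tendsto_zero)
  moreover have "bh_sol mu K u t = 1 / x t" for t
    using bh_sol_eq_inverse_affine_iter[of mu K u t, OF mu _ u] K alpha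
    by (simp add: x_def f_def less_le_trans)
  moreover have "periodic_seq tau (\<lambda>t. 1 / y t)" using yper by (simp add: periodic_seq_def y_def)
  ultimately show ?thesis unfolding asymp_periodic_def
    by (intro exI[of _ "\<lambda>t. 1 / y t"] exI[of _ "\<lambda>t. 1 / x t - 1 / y t"]) auto
qed

theorem mainTheorem20:
  fixes mu alpha beta u :: real and tau :: nat and K :: "nat \<Rightarrow> real"
  assumes "mu > 1" and "tau > 0"
    and "asymp_periodic tau K"
    and "0 < alpha" and "alpha \<le> beta"
    and "\<And>t. alpha \<le> K t \<and> K t \<le> beta"
    and "u \<ge> 0"
  shows "asymp_periodic tau (bh_sol mu K u)"
proof (cases "u = 0")
  case True
  then have "bh_sol mu K u t = 0" for t by (induction t) simp_all
  then show ?thesis unfolding asymp_periodic_def periodic_seq_def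
    by (intro exI[of _ "\<lambda>_. 0"] exI[of _ "\<lambda>_. 0"]) auto
next
  case False
  from assms(3) obtain P R where "periodic_seq tau P" "\<And>t. K t = P t + R t" "R \<longlonglongrightarrow> 0"
    unfolding asymp_periodic_def by blast
  with False assms show ?thesis by (intro bh_sol_asymp_periodic_pos) auto
qed

end
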